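(* Let $H$ be a Hilbert space and consider the Cauchy problem $\dot{u}=A(t)u+F(t,u)$, $t\ge 0$, $u(0)=u_0$, for a function $u(t)$ with values in $H$, where $\dot u := \frac{du}{dt}$. Assume that $A(t)$ is a bounded linear operator in $H$ satisfying $\mathrm{Re}(A(t)u,u)\le -k\|u\|^2$ for all $u\in H$ and all $t\ge 0$, where $k>0$ is a constant, and that $F(t,u)$ is a nonlinear map in $H$ satisfying $\|F(t,u)\|\le c_0\|u\|^p$, where $c_0>0$ and $p>1$ are constants. Then the solution to this problem satisfies the estimate $\|u(t)\|=O(e^{-(k-\epsilon)t})$ as $t\to\infty$. Here $0<\epsilon<k$ can be chosen arbitrarily small if $\|u_0\|$ is sufficiently small.
   Context: Hilbert space $H$; $A(t)$ a bounded linear dissipative operator; the problem is $\dot{u}=A(t)u+F(t,u)+b(t)$, $u(0)=u_0$, with the persistently acting perturbation $b(t)=0$. *)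

theory Defs
  imports "HOL-Analysis.Analysis" "HOL-Library.Landau_Symbols"
begin

end

theory Submission
  imports Defs
begin

text \<open>
  Along a solution, \<open>(\<parallel>u\<parallel>^2)' = 2\<langle>A u + F u, u\<rangle> \<le> -2k\<parallel>u\<parallel>^2 + 2c\<^sub>0\<parallel>u\<parallel>^(p+1)\<close>.
  While \<open>\<parallel>u\<parallel> \<le> \<delta> = (\<epsilon>/c\<^sub>0)^(1/(p-1))\<close> the nonlinear term is at most \<open>2\<epsilon>\<parallel>u\<parallel>^2\<close>,
  so \<open>e^(2(k-\<epsilon>)t) \<parallel>u(t)\<parallel>^2\<close> does not increase and \<open>\<parallel>u(t)\<parallel> \<le> \<parallel>u(0)\<parallel> e^(-(k-\<epsilon>)t)\<close>.
  Hence if \<open>\<parallel>u(0)\<parallel> < \<delta>\<close>, then \<open>\<parallel>u\<parallel>\<close> never reaches \<open>\<delta>\<close>: at a first such time the bound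
  would already hold and give \<open>\<parallel>u\<parallel> \<le> \<parallel>u(0)\<parallel> < \<delta>\<close>.
\<close>

lemma powr_le_mult_if_small:
  fixes a p n :: real
  assumes "a > 0" "p > 1" "0 \<le> n" "n \<le> a powr (1 / (p - 1))"
  shows "n powr p \<le> a * n"
proof (cases "n = 0")
  case False
  then have n_pos: "n > 0" using assms(3) by simp
  have "n powr p = n powr ((p - 1) + 1)" by simp
  also have "\<dots> = n powr (p - 1) * n powr 1" by (rule powr_add)
  also have "\<dots> = n powr (p - 1) * n"
    using n_pos by simp
  also have "\<dots> \<le> (a powr (1 / (p - 1))) powr (p - 1) * n"
    using n_pos assms by (intro mult_right_mono powr_mono2) auto
  also have "\<dots> = a * n"
    using assms by (simp add: powr_powr)
  finally show ?thesis .
qed simp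

lemma inner_le_of_dissipative_plus_small:
  fixes a f v :: "'a::real_inner"
  assumes diss: "inner a v \<le> - k * (norm v)\<^sup>2"
    and f_bound: "norm f \<le> c\<^sub>0 * norm v powr p"
    and "c\<^sub>0 > 0" "p > 1" "\<epsilon> > 0"
    and small: "norm v \<le> (\<epsilon> / c\<^sub>0) powr (1 / (p - 1))"
  shows "inner (a + f) v \<le> - (k - \<epsilon>) * (norm v)\<^sup>2"
proof -
  have "inner f v \<le> norm f * norm v" by (rule norm_cauchy_schwarz)
  also have "\<dots> \<le> c\<^sub>0 * norm v powr p * norm v"
    using f_bound by (intro mult_right_mono) auto
  also have "\<dots> \<le> c\<^sub>0 * ((\<epsilon> / c\<^sub>0) * norm v) * norm v"
    using powr_le_mult_if_small[OF _ \<open>p > 1\<close> _ small] assms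
    by (intro mult_right_mono mult_left_mono) auto
  also have "\<dots> = \<epsilon> * (norm v)\<^sup>2"
    using \<open>c\<^sub>0 > 0\<close> by (simp add: power2_eq_square)
  finally show ?thesis
    using diss by (simp add: inner_add_left algebra_simps)
qed

lemma has_real_derivative_exp_mult_inner_self:
  fixes u :: "real \<Rightarrow> 'a::real_inner"
  assumes "(u has_vector_derivative d) (at s)"
  shows "((\<lambda>s. exp (c * s) * inner (u s) (u s)) has_real_derivative
           exp (c * s) * (c * inner (u s) (u s) + 2 * inner d (u s))) (at s)"
proof -
  have u_der: "(u has_derivative (\<lambda>h. h *\<^sub>R d)) (at s)"
    using assms by (simp add: has_vector_derivative_def)
  have inner_der: "((\<lambda>s. inner (u s) (u s)) has_real_derivative 2 * inner d (u s)) (at s)"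
    unfolding has_field_derivative_def
    by (rule has_derivative_eq_rhs[OF has_derivative_inner[OF u_der u_der]])
       (auto simp: inner_commute algebra_simps)
  show ?thesis
    by (rule derivative_eq_intros inner_der | simp)+ (simp add: algebra_simps)
qed

lemma norm_le_exp_decay_of_inner_bound:
  fixes u u' :: "real \<Rightarrow> 'a::real_inner"
  assumes "0 \<le> t" and cont: "continuous_on {0..t} u"
    and der: "\<And>s. 0 < s \<Longrightarrow> s < t \<Longrightarrow> (u has_vector_derivative u' s) (at s)"
    and decay: "\<And>s. 0 < s \<Longrightarrow> s < t \<Longrightarrow> inner (u' s) (u s) \<le> - a * (norm (u s))\<^sup>2"
  shows "norm (u t) \<le> norm (u 0) * exp (- a * t)"
proof -
  define h where "h s = exp (2 * a * s) * inner (u s) (u s)" for s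
  have "h t \<le> h 0"
  proof (rule DERIV_nonpos_imp_decreasing_open[OF \<open>0 \<le> t\<close>])
    fix s assume s: "0 < s" "s < t"
    have "2 * a * inner (u s) (u s) + 2 * inner (u' s) (u s) \<le> 0"
      using decay[OF s] by (simp add: power2_norm_eq_inner)
    then have "exp (2 * a * s) * (2 * a * inner (u s) (u s) + 2 * inner (u' s) (u s)) \<le> 0"
      by (intro mult_nonneg_nonpos) simp_all
    then show "\<exists>y. (h has_real_derivative y) (at s) \<and> y \<le> 0"
      unfolding h_def using has_real_derivative_exp_mult_inner_self[OF der[OF s]] by blast
  next
    show "continuous_on {0..t} h"
      unfolding h_def using cont by (intro continuous_intros)
  qed
  then have "exp (2 * a * t) * (norm (u t))\<^sup>2 \<le> (norm (u 0))\<^sup>2"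
    unfolding h_def by (simp add: power2_norm_eq_inner)
  then have "(norm (u t))\<^sup>2 \<le> (norm (u 0))\<^sup>2 * exp (- (2 * a * t))"
    by (simp add: exp_minus field_simps)
  also have "exp (- (2 * a * t)) = (exp (- a * t))\<^sup>2"
    unfolding power2_eq_square exp_add[symmetric] by simp
  finally have "(norm (u t))\<^sup>2 \<le> (norm (u 0) * exp (- a * t))\<^sup>2"
    by (simp add: power_mult_distrib)
  then show ?thesis
    by (rule power2_le_imp_le) simp
qed

text \<open>A first-exit argument: the hypothesis at \<open>t = 0\<close> is unconditional.\<close>

lemma stays_below_if_below_while_bounded:
  fixes g :: "real \<Rightarrow> real"
  assumes cont: "continuous_on {0..} g"
    and step: "\<And>t. 0 \<le> t \<Longrightarrow> (\<And>s. 0 < s \<Longrightarrow> s < t \<Longrightarrow> g s \<le> \<delta>) \<Longrightarrow> g t < \<delta>"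
    and "0 \<le> t"
  shows "g t < \<delta>"
proof (rule ccontr)
  assume "\<not> g t < \<delta>"
  define S where "S = {0..} \<inter> g -` {\<delta>..}"
  have "t \<in> S" using \<open>0 \<le> t\<close> \<open>\<not> g t < \<delta>\<close> unfolding S_def by auto
  moreover have "closed S"
    unfolding S_def using cont by (intro continuous_closed_preimage) auto
  moreover have S_bdd: "bdd_below S"
    unfolding S_def by (rule bdd_belowI[of _ 0]) auto
  ultimately have "Inf S \<in> S" by (intro closed_contains_Inf) auto
  then have "g (Inf S) < \<delta>"
  proof (intro step)
    fix s assume "0 < s" "s < Inf S"
    then show "g s \<le> \<delta>"
      using cInf_lower[OF _ S_bdd, of s] unfolding S_def by force
  qed (auto simp: S_def)
  with \<open>Inf S \<in> S\<close> show False unfolding S_def by auto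
qed

lemma norm_le_exp_decay_of_small_solution:
  fixes A F :: "real \<Rightarrow> 'a::real_inner \<Rightarrow> 'a" and u :: "real \<Rightarrow> 'a"
  assumes A_diss: "\<And>t v. t \<ge> 0 \<Longrightarrow> inner (A t v) v \<le> - k * (norm v)\<^sup>2"
    and F_bound: "\<And>t v. t \<ge> 0 \<Longrightarrow> norm (F t v) \<le> c\<^sub>0 * norm v powr p"
    and c0_pos: "c\<^sub>0 > 0" and p_gt: "p > 1" and \<epsilon>: "0 < \<epsilon>" "\<epsilon> \<le> k"
    and u_der: "\<And>t. t \<ge> 0 \<Longrightarrow>
      (u has_vector_derivative (A t (u t) + F t (u t))) (at t within {0..})"
    and u0_small: "norm (u 0) < (\<epsilon> / c\<^sub>0) powr (1 / (p - 1))"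
    and "0 \<le> t"
  shows "norm (u t) \<le> norm (u 0) * exp (- (k - \<epsilon>) * t)"
proof -
  define \<delta> where "\<delta> = (\<epsilon> / c\<^sub>0) powr (1 / (p - 1))"
  have cont: "continuous_on {0..} u"
    using has_vector_derivative_continuous[OF u_der]
    by (simp add: continuous_on_eq_continuous_within)
  have der: "(u has_vector_derivative A s (u s) + F s (u s)) (at s)" if "0 < s" for s
  proof -
    have "(u has_vector_derivative A s (u s) + F s (u s)) (at s within {0<..})"
      using that by (intro has_vector_derivative_within_subset[OF u_der]) auto
    moreover have "at s within {0<..} = at s"
      using that by (intro at_within_open) auto
    ultimately show ?thesis by simp
  qed
  have decay: "norm (u t) \<le> norm (u 0) * exp (- (k - \<epsilon>) * t)"
    if "0 \<le> t" and bounded: "\<And>s. 0 < s \<Longrightarrow> s < t \<Longrightarrow> norm (u s) \<le> \<delta>" for t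
  proof (rule norm_le_exp_decay_of_inner_bound[OF \<open>0 \<le> t\<close> _ der])
    show "continuous_on {0..t} u" using cont by (rule continuous_on_subset) auto
    fix s assume s: "0 < s" "s < t"
    show "inner (A s (u s) + F s (u s)) (u s) \<le> - (k - \<epsilon>) * (norm (u s))\<^sup>2"
      using s \<epsilon> bounded[OF s, unfolded \<delta>_def]
      by (intro inner_le_of_dissipative_plus_small[OF A_diss F_bound c0_pos p_gt]) auto
  qed
  have small: "norm (u t) < \<delta>" if "0 \<le> t" for t
  proof (rule stays_below_if_below_while_bounded[OF _ _ that])
    show "continuous_on {0..} (\<lambda>t. norm (u t))" using cont by (intro continuous_intros)
    fix t assume "0 \<le> t" "\<And>s. 0 < s \<Longrightarrow> s < t \<Longrightarrow> norm (u s) \<le> \<delta>"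
    with decay have "norm (u t) \<le> norm (u 0) * exp (- (k - \<epsilon>) * t)" by blast
    also have "\<dots> \<le> norm (u 0)"
      using \<open>0 \<le> t\<close> \<epsilon> by (intro mult_left_le) (auto intro: mult_nonpos_nonneg)
    finally show "norm (u t) < \<delta>" using u0_small unfolding \<delta>_def by simp
  qed
  show ?thesis
    using \<open>0 \<le> t\<close> small by (intro decay) (auto intro: less_imp_le)
qed

theorem theorem3:
  fixes A :: "real \<Rightarrow> 'a::{real_inner, complete_space} \<Rightarrow> 'a"
    and F :: "real \<Rightarrow> 'a \<Rightarrow> 'a"
    and k c\<^sub>0 p :: real
  assumes A_lin: "\<And>t. t \<ge> 0 \<Longrightarrow> bounded_linear (A t)"
    and A_diss: "\<And>t v. t \<ge> 0 \<Longrightarrow> inner (A t v) v \<le> - k * (norm v)\<^sup>2"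
    and k_pos: "k > 0"
    and F_bound: "\<And>t v. t \<ge> 0 \<Longrightarrow> norm (F t v) \<le> c\<^sub>0 * norm v powr p"
    and c0_pos: "c\<^sub>0 > 0"
    and p_gt: "p > 1"
  shows "\<forall>\<epsilon>. 0 < \<epsilon> \<and> \<epsilon> < k \<longrightarrow>
           (\<exists>\<delta>>0. \<forall>u :: real \<Rightarrow> 'a.
              (\<forall>t\<ge>0. (u has_vector_derivative (A t (u t) + F t (u t))) (at t within {0..}))
              \<and> norm (u 0) < \<delta>
              \<longrightarrow> (\<lambda>t. norm (u t)) \<in> O(\<lambda>t. exp (- (k - \<epsilon>) * t)))"
proof (intro allI impI)
  fix \<epsilon> :: real
  assume \<epsilon>: "0 < \<epsilon> \<and> \<epsilon> < k"
  show "\<exists>\<delta>>0. \<forall>u :: real \<Rightarrow> 'a.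
          (\<forall>t\<ge>0. (u has_vector_derivative (A t (u t) + F t (u t))) (at t within {0..}))
          \<and> norm (u 0) < \<delta>
          \<longrightarrow> (\<lambda>t. norm (u t)) \<in> O(\<lambda>t. exp (- (k - \<epsilon>) * t))"
  proof (intro exI[of _ "(\<epsilon> / c\<^sub>0) powr (1 / (p - 1))"] conjI allI impI)
    show "(\<epsilon> / c\<^sub>0) powr (1 / (p - 1)) > 0" using \<epsilon> c0_pos by simp
    fix u :: "real \<Rightarrow> 'a"
    assume u: "(\<forall>t\<ge>0. (u has_vector_derivative (A t (u t) + F t (u t))) (at t within {0..}))
              \<and> norm (u 0) < (\<epsilon> / c\<^sub>0) powr (1 / (p - 1))"
    have "norm (u t) \<le> norm (u 0) * exp (- (k - \<epsilon>) * t)" if "0 \<le> t" for t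
      using \<epsilon> u
      by (intro norm_le_exp_decay_of_small_solution[OF A_diss F_bound c0_pos p_gt _ _ _ _ that]) auto
    then show "(\<lambda>t. norm (u t)) \<in> O(\<lambda>t. exp (- (k - \<epsilon>) * t))"
      by (intro bigoI[of _ "norm (u 0)"] eventually_mono[OF eventually_ge_at_top[of 0]]) simp
  qed
qed

end
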